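(* Let $k$ be an algebraically closed field of characteristic $0$. For every $\mu\in k$, every integer $m\ge2$, every $s\ge0$, integers $m_1,\dots,m_s\ge1$ and $\lambda_1,\dots,\lambda_s\in k^\times$, there exists a $k$-valued pseudocharacter $\alpha$ of $\mathrm{Cob}_2$ with $$Z_\alpha(T)=\mu+mT+\sum_{i=1}^s\frac{m_i\lambda_i^{-1}}{1-\lambda_iT}.$$
   Context: $\mathrm{Cob}_2$ is the rigid symmetric monoidal category of oriented two-dimensional cobordisms between closed oriented one-manifolds, with unit the empty manifold $\emptyset$. An evaluation is a monoid homomorphism $\alpha:\mathrm{End}_{\mathrm{Cob}_2}(\emptyset)\to k$ ($\alpha(\emptyset)=1$, multiplicative on disjoint unions); it is determined by $\alpha_g:=\alpha(S_g)$, $S_g$ the closed connected oriented genus-$g$ surface, and $Z_\alpha(T)=\sum_{g\ge0}\alpha_gT^g$ (rational functions identified with their expansions at $T=0$). Extend $\alpha$ linearly. For an object $N$ and $n\ge1$, $e^-_{N,n}=\sum_{\sigma\in S_n}\mathrm{sgn}(\sigma)\sigma\in k\,\mathrm{End}(N^{\sqcup n})$ via permutation cobordisms; $\mathrm{cl}(f)$ denotes the closure (categorical trace) of an endomorphism $f$. $\deg_\alpha(N)$ is the least $d\ge0$ with $\alpha(\mathrm{cl}(h\circ e^-_{N,d+1}))=0$ for all $h\in\mathrm{End}_{\mathrm{Cob}_2}(N^{\sqcup(d+1)})$ ($\infty$ if none); $\alpha$ is a pseudocharacter of $\mathrm{Cob}_2$ if $\deg_\alpha(N)<\infty$ for every object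 $N$. *)

theory Defs
  imports "HOL-Computational_Algebra.Computational_Algebra" "HOL-Combinatorics.Permutations" "HOL-Library.Extended_Nat"
begin

text \<open>An object is a disjoint union of n circles (n :: nat).
An endomorphism of the object with K circles is represented by data (c, cmp, gen):
the surface has components indexed by 0..<c, component j has genus gen j; the boundary
circle (False, i) (i-th incoming circle, i < K) lies on component cmp (False, i), and
the boundary circle (True, i) (i-th outgoing circle) lies on component cmp (True, i).
Components not touched by the boundary are closed components.  By the classification
of surfaces every oriented cobordism is (up to diffeomorphism rel boundary) of this form.\<close>

definition endo_wf :: "nat \<Rightarrow> nat \<Rightarrow> (bool \<times> nat \<Rightarrow> nat) \<Rightarrow> bool" where
  "endo_wf K c cmp \<longleftrightarrow> (\<forall>b i. i < K \<longrightarrow> cmp (b, i) < c)"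

text \<open>Permutation of the K = n*(d+1) circles of N^(d+1) induced by a permutation sigma
of the d+1 blocks (each block a copy of N with n circles).\<close>
definition block_perm :: "nat \<Rightarrow> (nat \<Rightarrow> nat) \<Rightarrow> nat \<Rightarrow> nat" where
  "block_perm n \<sigma> i = \<sigma> (i div n) * n + i mod n"

text \<open>Closing up h o sigma: the outgoing circle i of h is glued to the incoming circle
block_perm n sigma i of h.  The gluing graph on the components 0..<c of h:\<close>
definition glue_edges :: "nat \<Rightarrow> nat \<Rightarrow> (nat \<Rightarrow> nat) \<Rightarrow> (bool \<times> nat \<Rightarrow> nat) \<Rightarrow> (nat \<times> nat) set" where
  "glue_edges n K \<sigma> cmp = {(cmp (True, i), cmp (False, block_perm n \<sigma> i)) | i. i < K}"

definition closed_comps :: "nat \<Rightarrow> nat \<Rightarrow> (nat \<Rightarrow> nat) \<Rightarrow> nat \<Rightarrow> (bool \<times> nat \<Rightarrow> nat) \<Rightarrow> nat set set" where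
  "closed_comps n K \<sigma> c cmp =
     {0..<c} // ((glue_edges n K \<sigma> cmp \<union> (glue_edges n K \<sigma> cmp)\<inverse>)\<^sup>*)"

text \<open>Genus of a closed component C: sum of genera of the pieces plus the first Betti
number of the gluing graph restricted to C (Euler characteristic count).\<close>
definition comp_genus :: "nat \<Rightarrow> (bool \<times> nat \<Rightarrow> nat) \<Rightarrow> (nat \<Rightarrow> nat) \<Rightarrow> nat set \<Rightarrow> nat" where
  "comp_genus K cmp gen C =
     (\<Sum>v\<in>C. gen v) + card {i. i < K \<and> cmp (True, i) \<in> C} + 1 - card C"

text \<open>An evaluation alpha is determined by the sequence a g = alpha(S_g); on a closed
surface it is the product over connected components.  This is
alpha(cl(h o sigma)) for h = (c, cmp, gen) an endomorphism of N^(d+1), |N| = n circles.\<close>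
definition eval_closure :: "(nat \<Rightarrow> 'k::comm_ring_1) \<Rightarrow> nat \<Rightarrow> nat \<Rightarrow> (nat \<Rightarrow> nat)
    \<Rightarrow> nat \<Rightarrow> (bool \<times> nat \<Rightarrow> nat) \<Rightarrow> (nat \<Rightarrow> nat) \<Rightarrow> 'k" where
  "eval_closure a n K \<sigma> c cmp gen =
     (\<Prod>C\<in>closed_comps n K \<sigma> c cmp. a (comp_genus K cmp gen C))"

text \<open>alpha(cl(h o e^-_{N,d+1})) = 0 for all h in End(N^(d+1)), N = n circles.\<close>
definition antisym_vanishes :: "(nat \<Rightarrow> 'k::comm_ring_1) \<Rightarrow> nat \<Rightarrow> nat \<Rightarrow> bool" where
  "antisym_vanishes a n d \<longleftrightarrow>
     (\<forall>c cmp gen. endo_wf (n * Suc d) c cmp \<longrightarrow>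
        (\<Sum>\<sigma>\<in>{\<sigma>. \<sigma> permutes {..<Suc d}}.
            of_int (sign \<sigma>) * eval_closure a n (n * Suc d) \<sigma> c cmp gen) = 0)"

definition deg_alpha :: "(nat \<Rightarrow> 'k::comm_ring_1) \<Rightarrow> nat \<Rightarrow> enat" where
  "deg_alpha a n = (if \<exists>d. antisym_vanishes a n d
                    then enat (LEAST d. antisym_vanishes a n d) else \<infinity>)"

definition pseudocharacter :: "(nat \<Rightarrow> 'k::comm_ring_1) \<Rightarrow> bool" where
  "pseudocharacter a \<longleftrightarrow> (\<forall>n. deg_alpha a n < \<infinity>)"

definition Z_alpha :: "(nat \<Rightarrow> 'k::comm_ring_1) \<Rightarrow> 'k fps" where
  "Z_alpha a = Abs_fps a"

end

theory Submission
  imports Defs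
begin

text \<open>If \<open>a g = (\<Sum>j<R. \<gamma> j powi (g - 1))\<close> with all \<open>\<gamma> j \<noteq> 0\<close>, the value of \<open>a\<close> on a closed
  surface is a state sum over colourings of its pieces by \<open>{..<R}\<close> that agree across every
  gluing circle, a piece of genus \<open>h\<close> with \<open>b\<close> outgoing circles contributing \<open>\<gamma> powi (h + b - 1)\<close>
  in its colour. If \<open>N\<close> has \<open>n\<close> circles and \<open>d \<ge> R ^ n\<close>, two of the \<open>d + 1\<close> copies of \<open>N\<close>
  receive the same colouring of their outgoing circles, and the transposition exchanging them
  cancels that colouring in the antisymmetrised closure; hence \<open>deg_alpha a n \<le> R ^ n\<close>.

  The required sequence is the value at \<open>e = 0\<close> of a polynomial family of such sequences: for
  \<open>e \<noteq> 0\<close> take the \<open>lam i\<close> with multiplicities \<open>ms i\<close>, \<open>m - 2\<close> copies of \<open>e\<close>, and the two roots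
  of \<open>r\<^sup>2 - (mu e\<^sup>2 - (m - 2) e) r + e\<^sup>2\<close>. The number \<open>R = m + (\<Sum>i<s. ms i)\<close> of colours does
  not depend on \<open>e\<close>, and the vanishing of the antisymmetrised closures is a polynomial identity
  in \<open>e\<close>, so it persists at \<open>e = 0\<close>.\<close>

section \<open>Components of a gluing graph\<close>

lemma card_component_le_card_edges:
  fixes src tgt :: "nat \<Rightarrow> 'a" and K :: nat
  defines "G \<equiv> {(src i, tgt i) | i. i < K}"
  shows "card ((G \<union> G\<inverse>)\<^sup>* `` {r}) \<le> card {i. i < K \<and> src i \<in> (G \<union> G\<inverse>)\<^sup>* `` {r}} + 1"
proof -
  define E where "E = G \<union> G\<inverse>"
  define C where "C = E\<^sup>* `` {r}"
  have "C \<subseteq> insert r (src ` {..<K} \<union> tgt ` {..<K})"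
  proof
    fix v assume "v \<in> C"
    then have "(r, v) \<in> E\<^sup>*" by (simp add: C_def)
    then show "v \<in> insert r (src ` {..<K} \<union> tgt ` {..<K})"
      by (cases rule: rtranclE) (auto simp: E_def G_def)
  qed
  then have "finite C" by (rule finite_subset) simp
  define dist where "dist v = (LEAST k. (r, v) \<in> E ^^ k)" for v
  have dist: "(r, v) \<in> E ^^ dist v" if "v \<in> C" for v
    using that unfolding dist_def C_def by (auto simp: rtrancl_power intro: LeastI_ex)
  have "\<exists>i<K. src i \<in> C \<and> (src i = v \<and> dist (tgt i) < dist v \<or> tgt i = v \<and> dist (src i) < dist v)"
    if v: "v \<in> C" "v \<noteq> r" for v
  proof -
    obtain k where k: "dist v = Suc k"
      using dist[OF v(1)] v(2) by (cases "dist v") auto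
    then obtain w where w: "(r, w) \<in> E ^^ k" "(w, v) \<in> E"
      using dist[OF v(1)] by (metis relpow_Suc_E)
    have "w \<in> C" using w(1) by (auto simp: C_def rtrancl_power)
    moreover have "dist w < dist v"
      using w(1) k unfolding dist_def by (metis Least_le less_Suc_eq_le)
    ultimately show ?thesis
      using w(2) v(1) by (auto simp: E_def G_def)
  qed
  then obtain e where e: "\<And>v. v \<in> C - {r} \<Longrightarrow> e v < K \<and> src (e v) \<in> C \<and>
      (src (e v) = v \<and> dist (tgt (e v)) < dist v \<or> tgt (e v) = v \<and> dist (src (e v)) < dist v)"
    by (metis DiffE singletonI)
  have "inj_on e (C - {r})"
  proof (rule inj_onI)
    fix v w assume "v \<in> C - {r}" "w \<in> C - {r}" "e v = e w"
    then show "v = w" using e[of v] e[of w] by auto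
  qed
  moreover have "e ` (C - {r}) \<subseteq> {i. i < K \<and> src i \<in> C}" using e by auto
  ultimately have "card (C - {r}) \<le> card {i. i < K \<and> src i \<in> C}"
    by (intro card_inj_on_le) auto
  moreover have "r \<in> C" by (simp add: C_def)
  ultimately show ?thesis
    using \<open>finite C\<close> by (simp add: C_def E_def card_Diff_singleton)
qed

lemma component_closed:
  fixes src tgt :: "nat \<Rightarrow> 'a" and K :: nat
  defines "G \<equiv> {(src i, tgt i) | i. i < K}"
  assumes "\<forall>i<K. src i \<in> V \<and> tgt i \<in> V" and "(x, y) \<in> (G \<union> G\<inverse>)\<^sup>*" and "x \<in> V"
  shows "y \<in> V"
  using assms(3,4) by induction (use assms(2) in \<open>auto simp: G_def\<close>)

lemma equiv_components:
  fixes src tgt :: "nat \<Rightarrow> 'a" and K :: nat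
  defines "G \<equiv> {(src i, tgt i) | i. i < K}"
  assumes "\<forall>i<K. src i \<in> V \<and> tgt i \<in> V"
  shows "equiv V (Restr ((G \<union> G\<inverse>)\<^sup>*) V)"
    and "V // Restr ((G \<union> G\<inverse>)\<^sup>*) V = V // (G \<union> G\<inverse>)\<^sup>*"
proof -
  have "sym ((G \<union> G\<inverse>)\<^sup>*)" by (intro sym_rtrancl) (auto simp: sym_def)
  then show "equiv V (Restr ((G \<union> G\<inverse>)\<^sup>*) V)"
    by (auto simp: equiv_def refl_on_def sym_def trans_def intro: rtrancl_trans)
  have "Restr ((G \<union> G\<inverse>)\<^sup>*) V `` {x} = (G \<union> G\<inverse>)\<^sup>* `` {x}" if "x \<in> V" for x
    using component_closed[OF assms(2) _ that] that by (auto simp: G_def)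
  then show "V // Restr ((G \<union> G\<inverse>)\<^sup>*) V = V // (G \<union> G\<inverse>)\<^sup>*"
    by (simp add: quotient_def)
qed

lemma respects_components_iff:
  fixes src tgt :: "nat \<Rightarrow> 'a" and K :: nat
  defines "G \<equiv> {(src i, tgt i) | i. i < K}"
  assumes "\<forall>i<K. src i \<in> V \<and> tgt i \<in> V"
  shows "\<kappa> respects Restr ((G \<union> G\<inverse>)\<^sup>*) V \<longleftrightarrow> (\<forall>i<K. \<kappa> (src i) = \<kappa> (tgt i))"
proof
  assume "\<kappa> respects Restr ((G \<union> G\<inverse>)\<^sup>*) V"
  then show "\<forall>i<K. \<kappa> (src i) = \<kappa> (tgt i)"
    using assms(2) by (force simp: congruent_def G_def)
next
  assume compat: "\<forall>i<K. \<kappa> (src i) = \<kappa> (tgt i)"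
  have "\<kappa> x = \<kappa> y" if "(x, y) \<in> (G \<union> G\<inverse>)\<^sup>*" for x y
    using that by induction (use compat in \<open>auto simp: G_def\<close>)
  then show "\<kappa> respects Restr ((G \<union> G\<inverse>)\<^sup>*) V"
    by (auto simp: congruent_def)
qed

section \<open>State sums\<close>

lemma prod_sum_quotient:
  fixes f :: "'a \<Rightarrow> 'b \<Rightarrow> 'c::comm_semiring_1"
  assumes r: "equiv V r" and fin: "finite V" "finite J"
  shows "(\<Prod>B\<in>V//r. \<Sum>j\<in>J. \<Prod>v\<in>B. f v j)
           = (\<Sum>\<kappa>\<in>{\<kappa> \<in> V \<rightarrow>\<^sub>E J. \<kappa> respects r}. \<Prod>v\<in>V. f v (\<kappa> v))"
proof -
  have class_eq: "r``{v} = B" if "B \<in> V//r" "v \<in> B" for B v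
    using that r by (metis equiv_class_eq_iff quotientE Image_singleton_iff)
  have class_ne: "(SOME v. v \<in> B) \<in> B" if "B \<in> V//r" for B
    using that r by (metis quotientE equiv_class_self someI)
  define ext where "ext \<phi> = (\<lambda>v\<in>V. \<phi> (r``{v}))" for \<phi> :: "'a set \<Rightarrow> 'b"
  have "(\<Prod>B\<in>V//r. \<Sum>j\<in>J. \<Prod>v\<in>B. f v j) = (\<Sum>\<phi>\<in>V//r \<rightarrow>\<^sub>E J. \<Prod>B\<in>V//r. \<Prod>v\<in>B. f v (\<phi> B))"
    using finite_quotient[OF fin(1) equiv_type[OF r]] fin(2) by (rule prod_sum_PiE)
  also have "\<dots> = (\<Sum>\<kappa>\<in>{\<kappa> \<in> V \<rightarrow>\<^sub>E J. \<kappa> respects r}. \<Prod>v\<in>V. f v (\<kappa> v))"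
  proof (rule sum.reindex_bij_witness[where j = ext and i = "\<lambda>\<kappa>. \<lambda>B\<in>V//r. \<kappa> (SOME v. v \<in> B)"])
    fix \<phi> assume \<phi>: "\<phi> \<in> V//r \<rightarrow>\<^sub>E J"
    show "(\<lambda>B\<in>V//r. ext \<phi> (SOME v. v \<in> B)) = \<phi>"
    proof
      fix B show "(\<lambda>B\<in>V//r. ext \<phi> (SOME v. v \<in> B)) B = \<phi> B"
        using \<phi> class_ne[of B] class_eq[of B] Union_quotient[OF r]
        by (cases "B \<in> V//r") (auto simp: ext_def)
    qed
    show "ext \<phi> \<in> {\<kappa> \<in> V \<rightarrow>\<^sub>E J. \<kappa> respects r}"
      using \<phi> r by (auto simp: ext_def congruent_def quotientI equiv_class_eq_iff)
    have "(\<Prod>v\<in>V. f v (ext \<phi> v)) = (\<Prod>B\<in>V//r. \<Prod>v\<in>B. f v (ext \<phi> v))"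
      using fin(1) partition_on_quotient[OF r] by (rule prod.partition)
    also have "\<dots> = (\<Prod>B\<in>V//r. \<Prod>v\<in>B. f v (\<phi> B))"
      using class_eq Union_quotient[OF r] by (intro prod.cong) (auto simp: ext_def)
    finally show "(\<Prod>v\<in>V. f v (ext \<phi> v)) = (\<Prod>B\<in>V//r. \<Prod>v\<in>B. f v (\<phi> B))" .
  next
    fix \<kappa> assume \<kappa>: "\<kappa> \<in> {\<kappa> \<in> V \<rightarrow>\<^sub>E J. \<kappa> respects r}"
    show "ext (\<lambda>B\<in>V//r. \<kappa> (SOME v. v \<in> B)) = \<kappa>"
    proof
      fix v show "ext (\<lambda>B\<in>V//r. \<kappa> (SOME v. v \<in> B)) v = \<kappa> v"
        using \<kappa> class_ne[of "r``{v}"] r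
        by (cases "v \<in> V") (auto simp: ext_def quotientI congruent_def)
    qed
    show "(\<lambda>B\<in>V//r. \<kappa> (SOME v. v \<in> B)) \<in> V//r \<rightarrow>\<^sub>E J"
      using \<kappa> class_ne Union_quotient[OF r] by auto
  qed
  finally show ?thesis .
qed

lemma power_int_sum:
  fixes x :: "'a::field"
  assumes "x \<noteq> 0"
  shows "x powi (\<Sum>v\<in>A. f v) = (\<Prod>v\<in>A. x powi f v)"
  by (induction A rule: infinite_finite_induct) (simp_all add: power_int_add assms)

lemma eval_closure_state_sum:
  fixes \<gamma> :: "nat \<Rightarrow> 'k::field"
  assumes a: "\<And>g. a g = (\<Sum>j<R. \<gamma> j powi (int g - 1))" and \<gamma>: "\<forall>j<R. \<gamma> j \<noteq> 0"
    and edges: "\<forall>i<K. cmp (True, i) < c \<and> cmp (False, block_perm n \<sigma> i) < c"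
  shows "eval_closure a n K \<sigma> c cmp gen
           = (\<Sum>\<kappa>\<in>{\<kappa> \<in> {0..<c} \<rightarrow>\<^sub>E {..<R}. \<forall>i<K. \<kappa> (cmp (True, i)) = \<kappa> (cmp (False, block_perm n \<sigma> i))}.
                \<Prod>v\<in>{0..<c}. \<gamma> (\<kappa> v) powi (int (gen v) + int (card {i. i < K \<and> cmp (True, i) = v}) - 1))"
proof -
  define src where "src i = cmp (True, i)" for i
  define tgt where "tgt i = cmp (False, block_perm n \<sigma> i)" for i
  define G where "G = glue_edges n K \<sigma> cmp"
  define w where "w v = int (gen v) + int (card {i. i < K \<and> src i = v}) - 1" for v
  have G: "G = {(src i, tgt i) | i. i < K}" by (simp add: G_def glue_edges_def src_def tgt_def)
  have edges': "\<forall>i<K. src i \<in> {0..<c} \<and> tgt i \<in> {0..<c}" using edges by (simp add: src_def tgt_def)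
  note comp_equiv = equiv_components[OF edges', folded G]
  have comps: "closed_comps n K \<sigma> c cmp = {0..<c} // Restr ((G \<union> G\<inverse>)\<^sup>*) {0..<c}"
    unfolding closed_comps_def G_def[symmetric] by (rule comp_equiv(2)[symmetric])
  have genus: "int (comp_genus K cmp gen B) - 1 = (\<Sum>v\<in>B. w v)"
    if B: "B \<in> closed_comps n K \<sigma> c cmp" for B
  proof -
    obtain x where B_def: "B = (G \<union> G\<inverse>)\<^sup>* `` {x}"
      using B by (auto simp: closed_comps_def G_def elim: quotientE)
    \<comment> \<open>makes the truncated subtraction in \<open>comp_genus\<close> exact\<close>
    have "card B \<le> card {i. i < K \<and> src i \<in> B} + 1"
      unfolding B_def G by (rule card_component_le_card_edges)
    moreover have "finite B"
      using B comps comp_equiv(1) by (metis finite_atLeastLessThan finite_equiv_class equiv_type)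
    moreover have "card {i. i < K \<and> src i \<in> B} = (\<Sum>v\<in>B. card {i. i < K \<and> src i = v})"
    proof -
      have "{i. i < K \<and> src i \<in> B} = (\<Union>v\<in>B. {i. i < K \<and> src i = v})" by auto
      also have "card \<dots> = (\<Sum>v\<in>B. card {i. i < K \<and> src i = v})"
        by (rule card_UN_disjoint) (use \<open>finite B\<close> in auto)
      finally show ?thesis .
    qed
    ultimately show ?thesis
      by (simp add: comp_genus_def w_def src_def sum.distrib sum_subtractf of_nat_diff)
  qed
  have "eval_closure a n K \<sigma> c cmp gen
          = (\<Prod>B\<in>closed_comps n K \<sigma> c cmp. \<Sum>j<R. \<Prod>v\<in>B. \<gamma> j powi w v)"
    unfolding eval_closure_def a using genus \<gamma> by (intro prod.cong sum.cong) (simp_all add: power_int_sum)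
  also have "\<dots> = (\<Sum>\<kappa>\<in>{\<kappa> \<in> {0..<c} \<rightarrow>\<^sub>E {..<R}. \<kappa> respects Restr ((G \<union> G\<inverse>)\<^sup>*) {0..<c}}.
                     \<Prod>v\<in>{0..<c}. \<gamma> (\<kappa> v) powi w v)"
    unfolding comps by (rule prod_sum_quotient[OF comp_equiv(1)]) simp_all
  finally show ?thesis
    unfolding respects_components_iff[OF edges', folded G] by (simp add: w_def src_def tgt_def)
qed

section \<open>Antisymmetrisation\<close>

lemma block_perm_comp: "block_perm n (\<sigma> \<circ> \<tau>) = block_perm n \<sigma> \<circ> block_perm n \<tau>"
  by (cases "n = 0") (auto simp: block_perm_def)

lemma block_index_less:
  assumes "b < m" "r < n"
  shows "b * n + r < n * (m :: nat)"
proof -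
  have "b * n + r < Suc b * n" using assms(2) by simp
  also have "\<dots> \<le> m * n" using assms(1) by (intro mult_le_mono1) simp
  finally show ?thesis by (simp add: mult.commute)
qed

lemma block_perm_less:
  assumes "\<sigma> permutes {..<m}" "i < n * m"
  shows "block_perm n \<sigma> i < n * m"
proof -
  have "0 < n" using assms(2) by (cases n) auto
  then have "i div n < m" using assms(2) by (simp add: div_less_iff_less_mult mult.commute)
  then show ?thesis
    unfolding block_perm_def using \<open>0 < n\<close> permutes_in_image[OF assms(1)]
    by (intro block_index_less) auto
qed

lemma sum_sign_eq_0_if_closed_under_transpose:
  fixes P :: "('a \<Rightarrow> 'a) \<Rightarrow> bool"
  assumes S: "finite S" "b \<in> S" "b' \<in> S" "b \<noteq> b'"
    and closed: "\<And>\<sigma>. \<sigma> permutes S \<Longrightarrow> P \<sigma> \<Longrightarrow> P (\<sigma> \<circ> transpose b b')"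
  shows "(\<Sum>\<sigma> | \<sigma> permutes S \<and> P \<sigma>. sign \<sigma>) = (0::int)"
proof (rule sum_involution_eq_0[where h = "\<lambda>\<sigma>. \<sigma> \<circ> transpose b b'"])
  have \<tau>: "transpose b b' permutes S" using S(2,3) by (rule permutes_swap_id)
  fix \<sigma> assume "\<sigma> \<in> {\<sigma>. \<sigma> permutes S \<and> P \<sigma>}"
  then have \<sigma>: "\<sigma> permutes S" "P \<sigma>" by simp_all
  have "permutation \<sigma>" "permutation (transpose b b')"
    using \<sigma>(1) \<tau> S(1) by (auto simp: permutation_permutes)
  then show "sign (\<sigma> \<circ> transpose b b') + sign \<sigma> = 0"
    using S(4) by (simp add: sign_compose sign_swap_id)
  show "\<sigma> \<circ> transpose b b' \<in> {\<sigma>. \<sigma> permutes S \<and> P \<sigma>}"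
    using permutes_compose[OF \<tau> \<sigma>(1)] closed[OF \<sigma>] by simp
  show "\<sigma> \<circ> transpose b b' \<circ> transpose b b' = \<sigma>"
    by (simp add: comp_assoc)
  have "\<sigma> (transpose b b' b) \<noteq> \<sigma> b"
    using S(4) permutes_inj[OF \<sigma>(1)] by (simp add: inj_eq)
  then show "\<sigma> \<circ> transpose b b' \<noteq> \<sigma>" by (metis comp_apply)
qed

lemma sum_sign_compatible_permutations_eq_0:
  assumes T: "finite T" "card T ^ n \<le> d" and \<kappa>: "\<forall>i<n * Suc d. \<kappa> (cmp (True, i)) \<in> T"
  shows "(\<Sum>\<sigma> | \<sigma> permutes {..<Suc d} \<and>
            (\<forall>i<n * Suc d. \<kappa> (cmp (True, i)) = \<kappa> (cmp (False, block_perm n \<sigma> i))). sign \<sigma>) = (0::int)"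
proof -
  define colours where "colours b = (\<lambda>r\<in>{..<n}. \<kappa> (cmp (True, b * n + r)))" for b
  have "colours b \<in> {..<n} \<rightarrow>\<^sub>E T" if "b < Suc d" for b
    unfolding colours_def using \<kappa> block_index_less[OF that] by (simp add: restrict_PiE_iff)
  then have "colours ` {..<Suc d} \<subseteq> {..<n} \<rightarrow>\<^sub>E T" by blast
  moreover have "card ({..<n} \<rightarrow>\<^sub>E T) < card {..<Suc d}"
    using T by (simp add: card_PiE)
  ultimately have "\<not> inj_on colours {..<Suc d}"
    using T(1) by (metis card_inj_on_le finite_PiE finite_lessThan not_le)
  then obtain b b' where bb: "b < Suc d" "b' < Suc d" "b \<noteq> b'" "colours b = colours b'"
    by (auto simp: inj_on_def)
  \<comment> \<open>Pigeonhole: blocks b and b' carry the same outgoing colours, so composing with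
      their transposition is a sign-reversing involution on the compatible permutations.\<close>
  have swap_colour: "\<kappa> (cmp (True, block_perm n (transpose b b') i)) = \<kappa> (cmp (True, i))"
    if "i < n * Suc d" for i
  proof -
    have "0 < n" using that by (cases n) auto
    then have block: "\<kappa> (cmp (True, q * n + i mod n)) = colours q (i mod n)" for q
      by (simp add: colours_def)
    have "colours (transpose b b' q) = colours q" for q
      using bb(4) by (simp add: transpose_def)
    then show ?thesis
      using block[of "transpose b b' (i div n)"] block[of "i div n"] by (simp add: block_perm_def)
  qed
  show ?thesis
  proof (rule sum_sign_eq_0_if_closed_under_transpose)
    fix \<sigma> assume \<sigma>: "\<sigma> permutes {..<Suc d}"
      and compat: "\<forall>i<n * Suc d. \<kappa> (cmp (True, i)) = \<kappa> (cmp (False, block_perm n \<sigma> i))"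
    have \<tau>: "transpose b b' permutes {..<Suc d}" using bb by (intro permutes_swap_id) auto
    show "\<forall>i<n * Suc d. \<kappa> (cmp (True, i)) = \<kappa> (cmp (False, block_perm n (\<sigma> \<circ> transpose b b') i))"
    proof (intro allI impI)
      fix i assume i: "i < n * Suc d"
      have "\<kappa> (cmp (True, i)) = \<kappa> (cmp (True, block_perm n (transpose b b') i))"
        using swap_colour[OF i] by simp
      also have "\<dots> = \<kappa> (cmp (False, block_perm n (\<sigma> \<circ> transpose b b') i))"
        using compat block_perm_less[OF \<tau> i] by (simp add: block_perm_comp)
      finally show "\<kappa> (cmp (True, i)) = \<kappa> (cmp (False, block_perm n (\<sigma> \<circ> transpose b b') i))" .
    qed
  qed (use bb in auto)
qed

lemma antisym_vanishes_power_sums: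
  fixes \<gamma> :: "nat \<Rightarrow> 'k::field"
  assumes a: "\<And>g. a g = (\<Sum>j<R. \<gamma> j powi (int g - 1))" and \<gamma>: "\<forall>j<R. \<gamma> j \<noteq> 0"
  shows "antisym_vanishes a n (R ^ n)"
  unfolding antisym_vanishes_def
proof (intro allI impI)
  fix c :: nat and cmp :: "bool \<times> nat \<Rightarrow> nat" and gen :: "nat \<Rightarrow> nat"
  define d where "d = R ^ n"
  define K where "K = n * Suc d"
  define S where "S = {\<sigma>. \<sigma> permutes {..<Suc d}}"
  define P where "P = {0..<c} \<rightarrow>\<^sub>E {..<R}"
  define compat where
    "compat \<sigma> \<kappa> \<longleftrightarrow> (\<forall>i<K. \<kappa> (cmp (True, i)) = \<kappa> (cmp (False, block_perm n \<sigma> i)))"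
    for \<sigma> \<kappa> :: "nat \<Rightarrow> nat"
  define W where
    "W \<kappa> = (\<Prod>v\<in>{0..<c}. \<gamma> (\<kappa> v) powi (int (gen v) + int (card {i. i < K \<and> cmp (True, i) = v}) - 1))"
    for \<kappa> :: "nat \<Rightarrow> nat"
  assume "endo_wf (n * Suc (R ^ n)) c cmp"
  then have wf: "\<forall>b i. i < K \<longrightarrow> cmp (b, i) < c" by (simp add: endo_wf_def K_def d_def)
  have "eval_closure a n K \<sigma> c cmp gen = (\<Sum>\<kappa>\<in>P. if compat \<sigma> \<kappa> then W \<kappa> else 0)" if "\<sigma> \<in> S" for \<sigma>
  proof -
    have "block_perm n \<sigma> i < K" if "i < K" for i
      using block_perm_less[of \<sigma> "Suc d" i n] \<open>\<sigma> \<in> S\<close> that by (simp add: S_def K_def)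
    then have "\<forall>i<K. cmp (True, i) < c \<and> cmp (False, block_perm n \<sigma> i) < c"
      using wf by blast
    then have "eval_closure a n K \<sigma> c cmp gen = (\<Sum>\<kappa>\<in>{\<kappa>\<in>P. compat \<sigma> \<kappa>}. W \<kappa>)"
      unfolding P_def compat_def W_def by (rule eval_closure_state_sum[OF a \<gamma>])
    also have "\<dots> = (\<Sum>\<kappa>\<in>P. if compat \<sigma> \<kappa> then W \<kappa> else 0)"
      by (rule sum.inter_filter) (simp add: P_def finite_PiE)
    finally show ?thesis .
  qed
  then have "(\<Sum>\<sigma>\<in>S. of_int (sign \<sigma>) * eval_closure a n K \<sigma> c cmp gen)
               = (\<Sum>\<sigma>\<in>S. \<Sum>\<kappa>\<in>P. if compat \<sigma> \<kappa> then W \<kappa> * of_int (sign \<sigma>) else 0)"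
    by (auto simp: sum_distrib_left intro!: sum.cong)
  also have "\<dots> = (\<Sum>\<kappa>\<in>P. \<Sum>\<sigma>\<in>S. if compat \<sigma> \<kappa> then W \<kappa> * of_int (sign \<sigma>) else 0)"
    by (rule sum.swap)
  also have "\<dots> = (\<Sum>\<kappa>\<in>P. W \<kappa> * of_int (\<Sum>\<sigma> | \<sigma> \<in> S \<and> compat \<sigma> \<kappa>. sign \<sigma>))"
    using finite_permutations[of "{..<Suc d}"]
    by (auto simp: sum.inter_filter[symmetric] S_def of_int_sum sum_distrib_left intro!: sum.cong)
  also have "\<dots> = 0"
  proof (intro sum.neutral ballI)
    fix \<kappa> assume "\<kappa> \<in> P"
    then have "\<forall>i<n * Suc d. \<kappa> (cmp (True, i)) \<in> {..<R}"
      using wf by (auto simp: P_def K_def)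
    then have "(\<Sum>\<sigma> | \<sigma> \<in> S \<and> compat \<sigma> \<kappa>. sign \<sigma>) = 0"
      using sum_sign_compatible_permutations_eq_0[of "{..<R}" n d \<kappa> cmp] by (simp add: S_def compat_def K_def d_def)
    then show "W \<kappa> * of_int (\<Sum>\<sigma> | \<sigma> \<in> S \<and> compat \<sigma> \<kappa>. sign \<sigma>) = 0" by simp
  qed
  finally show "(\<Sum>\<sigma>\<in>{\<sigma>. \<sigma> permutes {..<Suc (R ^ n)}}.
      of_int (sign \<sigma>) * eval_closure a n (n * Suc (R ^ n)) \<sigma> c cmp gen) = 0"
    by (simp add: S_def K_def d_def)
qed

section \<open>Degeneration\<close>

lemma antisym_vanishes_limit:
  fixes A :: "nat \<Rightarrow> 'k::field_char_0 poly"
  assumes "\<And>e. e \<noteq> 0 \<Longrightarrow> antisym_vanishes (\<lambda>g. poly (A g) e) n d"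
  shows "antisym_vanishes (\<lambda>g. poly (A g) 0) n d"
  unfolding antisym_vanishes_def
proof (intro allI impI)
  fix c cmp gen assume wf: "endo_wf (n * Suc d) c cmp"
  define Q where "Q = (\<Sum>\<sigma> | \<sigma> permutes {..<Suc d}. of_int (sign \<sigma>) *
        (\<Prod>C\<in>closed_comps n (n * Suc d) \<sigma> c cmp. A (comp_genus (n * Suc d) cmp gen C)))"
  have poly_Q: "poly Q e = (\<Sum>\<sigma> | \<sigma> permutes {..<Suc d}.
      of_int (sign \<sigma>) * eval_closure (\<lambda>g. poly (A g) e) n (n * Suc d) \<sigma> c cmp gen)" for e
    by (simp add: Q_def eval_closure_def poly_sum poly_prod)
  have "poly (Q * [:0, 1:]) e = 0" for e
  proof (cases "e = 0")
    case False
    then show ?thesis using assms[OF False] wf by (simp add: poly_Q antisym_vanishes_def)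
  qed simp
  then have "Q * [:0, 1:] = 0" using poly_all_0_iff_0 by blast
  then have "Q = 0" by simp
  then show "(\<Sum>\<sigma> | \<sigma> permutes {..<Suc d}.
      of_int (sign \<sigma>) * eval_closure (\<lambda>g. poly (A g) 0) n (n * Suc d) \<sigma> c cmp gen) = 0"
    using poly_Q[of 0] by simp
qed

lemma pseudocharacter_of_power_sums_limit:
  fixes A :: "nat \<Rightarrow> 'k::field_char_0 poly"
  assumes "\<And>e. e \<noteq> 0 \<Longrightarrow> \<exists>xs. length xs = R \<and> (\<forall>x\<in>set xs. x \<noteq> 0) \<and>
                                (\<forall>g. poly (A g) e = (\<Sum>x\<leftarrow>xs. x powi (int g - 1)))"
  shows "pseudocharacter (\<lambda>g. poly (A g) 0)"
proof -
  have "antisym_vanishes (\<lambda>g. poly (A g) e) n (R ^ n)" if e: "e \<noteq> 0" for e n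
  proof -
    obtain xs where xs: "length xs = R" "\<forall>x\<in>set xs. x \<noteq> 0"
      "\<And>g. poly (A g) e = (\<Sum>x\<leftarrow>xs. x powi (int g - 1))"
      using assms[OF e] by blast
    show ?thesis
    proof (rule antisym_vanishes_power_sums)
      show "poly (A g) e = (\<Sum>j<R. (xs ! j) powi (int g - 1))" for g
        by (simp add: xs(1,3) sum_list_sum_nth atLeast0LessThan)
    qed (use xs in auto)
  qed
  then have "antisym_vanishes (\<lambda>g. poly (A g) 0) n (R ^ n)" for n
    by (rule antisym_vanishes_limit)
  then show ?thesis
    by (auto simp: pseudocharacter_def deg_alpha_def)
qed

fun power_sum_poly :: "'a::comm_ring_1 poly \<Rightarrow> 'a poly \<Rightarrow> nat \<Rightarrow> 'a poly" where
  "power_sum_poly e1 e2 0 = 2"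
| "power_sum_poly e1 e2 (Suc 0) = e1"
| "power_sum_poly e1 e2 (Suc (Suc h)) = e1 * power_sum_poly e1 e2 (Suc h) - e2 * power_sum_poly e1 e2 h"

lemma poly_power_sum_poly:
  assumes "poly e1 x = r1 + r2" "poly e2 x = r1 * r2"
  shows "poly (power_sum_poly e1 e2 h) x = r1 ^ h + r2 ^ h"
  using assms by (induction e1 e2 h rule: power_sum_poly.induct) (simp_all add: algebra_simps)

lemma poly_power_sum_poly_0:
  assumes "poly e1 0 = 0" "poly e2 0 = 0" "h > 0"
  shows "poly (power_sum_poly e1 e2 h) 0 = 0"
  using assms by (induction e1 e2 h rule: power_sum_poly.induct) auto

lemma exists_roots_with_sum_prod:
  fixes s p :: "'a::alg_closed_field"
  obtains r1 r2 where "s = r1 + r2" "p = r1 * r2"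
proof -
  obtain r where "poly [:p, -s, 1:] r = 0"
    using alg_closed_imp_poly_has_root[of "[:p, -s, 1:]"] by auto
  then have "r * (s - r) = p" by (simp add: algebra_simps)
  then show ?thesis by (intro that[of r "s - r"]) simp_all
qed

lemma power_sums_degenerate_to_delta:
  fixes mu :: "'k::{alg_closed_field, field_char_0}"
  assumes M: "2 \<le> M"
  obtains A :: "nat \<Rightarrow> 'k poly"
  where "\<And>g. poly (A g) 0 = (if g = 0 then mu else 0) + (if g = 1 then of_nat M else 0)"
    and "\<And>e. e \<noteq> 0 \<Longrightarrow> \<exists>xs. length xs = M \<and> (\<forall>x\<in>set xs. x \<noteq> 0) \<and>
                               (\<forall>g. poly (A g) e = (\<Sum>x\<leftarrow>xs. x powi (int g - 1)))"
proof
  define e1 :: "'k poly" where "e1 = [:0, - of_nat (M - 2), mu:]"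
  define e2 :: "'k poly" where "e2 = [:0, 0, 1:]"
  \<comment> \<open>At \<open>e \<noteq> 0\<close>, \<open>A g\<close> is the \<open>(g - 1)\<close>-st power sum of \<open>M - 2\<close> copies of \<open>e\<close> and the roots \<open>r1, r2\<close>
      of \<open>r\<^sup>2 - poly e1 e * r + poly e2 e\<close>; as \<open>1/r1 + 1/r2 = mu - (M - 2)/e\<close>, the \<open>(-1)\<close>-st power
      sum is the constant \<open>mu\<close>.\<close>
  define A where "A g = (if g = 0 then [:mu:]
      else smult (of_nat (M - 2)) (monom 1 (g - 1)) + power_sum_poly e1 e2 (g - 1))" for g
  have "of_nat (M - 2) + 2 = (of_nat M :: 'k)"
    using M by (metis le_add_diff_inverse2 of_nat_add of_nat_numeral)
  then show "poly (A g) 0 = (if g = 0 then mu else 0) + (if g = 1 then of_nat M else 0)" for g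
    by (cases "g \<le> 1") (auto simp: A_def poly_monom e1_def e2_def poly_power_sum_poly_0)
  fix e :: 'k assume e: "e \<noteq> 0"
  obtain r1 r2 where r: "poly e1 e = r1 + r2" "poly e2 e = r1 * r2"
    by (rule exists_roots_with_sum_prod)
  have r_nz: "r1 \<noteq> 0" "r2 \<noteq> 0" using r(2) e by (auto simp: e2_def)
  have inverse_sum: "inverse r1 + inverse r2 = mu - of_nat (M - 2) / e"
  proof -
    have "inverse r1 + inverse r2 = (r1 + r2) / (r1 * r2)" using r_nz by (simp add: field_simps)
    also have "\<dots> = mu - of_nat (M - 2) / e"
      using e unfolding r[symmetric] by (simp add: e1_def e2_def field_simps power2_eq_square)
    finally show ?thesis .
  qed
  define xs where "xs = replicate (M - 2) e @ [r1, r2]"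
  have "poly (A g) e = (\<Sum>x\<leftarrow>xs. x powi (int g - 1))" for g
  proof (cases g)
    case 0
    then show ?thesis
      using inverse_sum e by (simp add: A_def xs_def sum_list_replicate power_int_minus field_simps)
  next
    case (Suc h)
    then show ?thesis
      by (simp add: A_def xs_def sum_list_replicate poly_monom poly_power_sum_poly[OF r])
  qed
  moreover have "length xs = M" using M by (simp add: xs_def)
  moreover have "\<forall>x\<in>set xs. x \<noteq> 0" using e r_nz by (simp add: xs_def)
  ultimately show "\<exists>xs. length xs = M \<and> (\<forall>x\<in>set xs. x \<noteq> 0) \<and>
                        (\<forall>g. poly (A g) e = (\<Sum>x\<leftarrow>xs. x powi (int g - 1)))"
    by blast
qed

lemma pseudocharacter_power_sums_plus_delta:
  fixes mu :: "'k::{alg_closed_field, field_char_0}" and ys :: "'k list"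
  assumes "2 \<le> M" and "\<forall>y\<in>set ys. y \<noteq> 0"
  shows "pseudocharacter (\<lambda>g. (if g = 0 then mu else 0) + (if g = 1 then of_nat M else 0)
                               + (\<Sum>y\<leftarrow>ys. y powi (int g - 1)))"
proof -
  obtain A :: "nat \<Rightarrow> 'k poly"
    where A0: "\<And>g. poly (A g) 0 = (if g = 0 then mu else 0) + (if g = 1 then of_nat M else 0)"
      and A: "\<And>e. e \<noteq> 0 \<Longrightarrow> \<exists>xs. length xs = M \<and> (\<forall>x\<in>set xs. x \<noteq> 0) \<and>
                                  (\<forall>g. poly (A g) e = (\<Sum>x\<leftarrow>xs. x powi (int g - 1)))"
    using power_sums_degenerate_to_delta[OF assms(1)] by blast
  have "pseudocharacter (\<lambda>g. poly (A g + [:\<Sum>y\<leftarrow>ys. y powi (int g - 1):]) 0)"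
  proof (rule pseudocharacter_of_power_sums_limit)
    fix e :: 'k assume "e \<noteq> 0"
    then obtain xs where "length xs = M" "\<forall>x\<in>set xs. x \<noteq> 0"
      "\<forall>g. poly (A g) e = (\<Sum>x\<leftarrow>xs. x powi (int g - 1))"
      using A by blast
    then show "\<exists>zs. length zs = M + length ys \<and> (\<forall>z\<in>set zs. z \<noteq> 0) \<and>
        (\<forall>g. poly (A g + [:\<Sum>y\<leftarrow>ys. y powi (int g - 1):]) e = (\<Sum>z\<leftarrow>zs. z powi (int g - 1)))"
      using assms(2) by (intro exI[of _ "xs @ ys"]) auto
  qed
  then show ?thesis by (simp add: A0)
qed

lemma sum_list_replicate_blocks:
  "(\<Sum>x\<leftarrow>concat (map (\<lambda>i. replicate (k i) (x i)) [0..<s]). f x) = (\<Sum>i<s. of_nat (k i) * f (x i))"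
  by (induction s) (simp_all add: sum_list_replicate)

lemma fps_nth_inverse_geometric:
  fixes l :: "'a::field_char_0"
  shows "inverse (1 - fps_const l * fps_X) $ g = l ^ g"
  using one_minus_const_fps_X_neg_power'[of 1 l] by simp

theorem mainTheorem12:
  fixes mu :: "'k::{alg_closed_field, field_char_0}"
    and m :: int and s :: nat and ms :: "nat \<Rightarrow> nat" and lam :: "nat \<Rightarrow> 'k"
  assumes "m \<ge> 2"
    and "\<forall>i<s. ms i \<ge> 1"
    and "\<forall>i<s. lam i \<noteq> 0"
  shows "\<exists>a :: nat \<Rightarrow> 'k. pseudocharacter a \<and>
           Z_alpha a = fps_const mu + fps_const (of_int m) * fps_X
             + (\<Sum>i<s. fps_const (of_nat (ms i) / lam i)
                        * inverse (1 - fps_const (lam i) * fps_X))"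
proof -
  define F where "F = fps_const mu + fps_const (of_int m) * fps_X
      + (\<Sum>i<s. fps_const (of_nat (ms i) / lam i) * inverse (1 - fps_const (lam i) * fps_X))"
  define ys where "ys = concat (map (\<lambda>i. replicate (ms i) (lam i)) [0..<s])"
  have "($) F = (\<lambda>g. (if g = 0 then mu else 0) + (if g = 1 then of_nat (nat m) else 0)
                        + (\<Sum>y\<leftarrow>ys. y powi (int g - 1)))"
  proof
    fix g
    have "of_nat (ms i) / lam i * lam i ^ g = of_nat (ms i) * lam i powi (int g - 1)" if "i < s" for i
      using assms(3) that by (simp add: power_int_diff)
    then show "F $ g = (if g = 0 then mu else 0) + (if g = 1 then of_nat (nat m) else 0)
                       + (\<Sum>y\<leftarrow>ys. y powi (int g - 1))"
      using assms(1) by (simp add: F_def ys_def fps_sum_nth fps_nth_inverse_geometric sum_list_replicate_blocks)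
  qed
  moreover have "pseudocharacter (\<lambda>g. (if g = 0 then mu else 0) + (if g = 1 then of_nat (nat m) else 0)
                                        + (\<Sum>y\<leftarrow>ys. y powi (int g - 1)))"
    using assms(1,3) by (intro pseudocharacter_power_sums_plus_delta) (auto simp: ys_def)
  ultimately have "pseudocharacter (($) F)" by simp
  moreover have "Z_alpha (($) F) = F" by (simp add: Z_alpha_def fps_nth_inverse)
  ultimately show ?thesis unfolding F_def by blast
qed

end
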